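(* Let $q=p^{m_0}$ with $p$ prime, let $L$ be a finite extension of $\mathbb{F}_q((1/\theta))$ with ring of integers $\mathcal O$, and let $\rho$ be a permutation of $\{0,1,2,\ldots\}$. For every nonnegative integer $j$, as functions from $\mathbb{Z}_p$ to $\mathcal O$ we have $$\binom{y}{j}^{\rho_1}=\binom{y}{\rho_\ast j},$$ i.e. $\binom{\rho_\ast^{-1}y}{j}=\binom{y}{\rho_\ast j}$ for all $y\in\mathbb{Z}_p$.
   Context: For $y\in\mathbb{Z}_p$ written $q$-adically as $y=\sum_{j\ge0}c_jq^j$ with $0\le c_j<q$, set $\rho_\ast y:=\sum_{j\ge0}c_jq^{\rho(j)}$; this is a bijection (indeed homeomorphism) of $\mathbb{Z}_p$ stabilizing the nonnegative integers, with inverse $(\rho^{-1})_\ast$. For $y\in\mathbb{Z}_p$ and a nonnegative integer $j$, $\binom{y}{j}\in\mathbb{Z}_p$ is the usual binomial coefficient, viewed in $\mathcal O$ via reduction modulo $p$ (as $\mathbb{F}_p\subset\mathcal O$). For a continuous $f:\mathbb{Z}_p\to\mathcal O$, define $f^{\rho_1}(y):=f(\rho_\ast^{-1}y)$. *)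

theory Defs
  imports Main "HOL-Computational_Algebra.Primes"
begin

text \<open>An element y of Z_p is represented by its q-adic digit sequence c
  (with c i < q for all i), i.e. y = sum of c i * q^i.  This is a bijection
  between such digit sequences and Z_p.\<close>

definition qadic_trunc :: "nat \<Rightarrow> (nat \<Rightarrow> nat) \<Rightarrow> nat \<Rightarrow> nat" where
  "qadic_trunc q c N = (\<Sum>i<N. c i * q ^ i)"

definition nat_digits :: "nat \<Rightarrow> nat \<Rightarrow> nat \<Rightarrow> nat" where
  "nat_digits q n i = (n div q ^ i) mod q"

text \<open>Reduction mod p of the p-adic binomial coefficient binom(y, j), y given by
  digits c: the p-adic binomial coefficient is the p-adic limit of
  binom(y_N, j) for the truncations y_N of y, hence its reduction mod p is the
  eventual value of binom(y_N, j) mod p.  The result lies in {0..p-1} = F_p.\<close>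
definition binom_modp :: "nat \<Rightarrow> nat \<Rightarrow> (nat \<Rightarrow> nat) \<Rightarrow> nat \<Rightarrow> nat" where
  "binom_modp p q c j =
     (THE v. eventually (\<lambda>N. (qadic_trunc q c N choose j) mod p = v) sequentially)"

text \<open>rho_* on digit sequences: the digit at position i moves to position rho i;
  so (rho_* c) (rho i) = c i.  Its inverse (rho^{-1})_* sends c to c o rho.\<close>
definition rho_star_digits :: "(nat \<Rightarrow> nat) \<Rightarrow> (nat \<Rightarrow> nat) \<Rightarrow> (nat \<Rightarrow> nat)" where
  "rho_star_digits \<rho> c = c \<circ> inv \<rho>"

definition rho_star_nat :: "(nat \<Rightarrow> nat) \<Rightarrow> nat \<Rightarrow> nat \<Rightarrow> nat" where
  "rho_star_nat \<rho> q n = (\<Sum>i | nat_digits q n i \<noteq> 0. nat_digits q n i * q ^ \<rho> i)"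

end

theory Submission
  imports Defs "HOL-Number_Theory.Cong"
begin

text \<open>By Lucas' theorem for the prime power \<open>q = p\<^sup>m\<close>, \<open>binom(y, j) mod p\<close> is the
  product of \<open>binom(c\<^sub>i, d\<^sub>i)\<close> over the \<open>q\<close>-adic digits \<open>c\<^sub>i\<close> of \<open>y\<close> and \<open>d\<^sub>i\<close> of \<open>j\<close>.
  Applying \<open>\<rho>\<^sub>*\<close> to \<open>j\<close> moves its digit \<open>d\<^sub>i\<close> to position \<open>\<rho> i\<close>, while
  \<open>\<rho>\<^sub>*\<^sup>-\<^sup>1\<close> moves the digit of \<open>y\<close> at position \<open>\<rho> i\<close> to position \<open>i\<close>, so both sides are
  the same product, merely reindexed along \<open>\<rho>\<close>.\<close>

section \<open>Binomial coefficients modulo a prime\<close>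

lemma sum_atMost_two_points:
  fixes A B p i :: nat
  assumes "0 < p"
  shows "(\<Sum>k\<le>i. if k = 0 then A else if k = p then B else 0)
         = A + (if p \<le> i then B else 0)"
proof -
  have "(\<Sum>k\<le>i. if k = 0 then A else if k = p then B else 0)
      = (\<Sum>k\<le>i. (if k = 0 then A else 0) + (if k = p then B else 0))"
    by (intro sum.cong) (use assms in auto)
  also have "\<dots> = A + (if p \<le> i then B else 0)"
    using assms by (auto simp: sum.distrib)
  finally show ?thesis .
qed

text \<open>The congruence \<open>(1 + X)\<^sup>p\<^sup>a \<equiv> (1 + X\<^sup>p)\<^sup>a\<close>, read off coefficientwise through
  Vandermonde's identity.\<close>

lemma choose_prime_mult_cong:
  assumes p: "prime p"
  shows "[(p * a) choose i = (if p dvd i then a choose (i div p) else 0)] (mod p)"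
proof (induction a arbitrary: i)
  case 0
  show ?case
    by (cases "i = 0") (auto simp: binomial_eq_0)
next
  case (Suc a)
  have p0: "p > 0" using p prime_gt_0_nat by blast
  have "(p * Suc a) choose i = (\<Sum>k\<le>i. (p choose k) * ((p * a) choose (i - k)))"
    by (simp add: vandermonde add.commute)
  also have "[\<dots> = (\<Sum>k\<le>i. if k = 0 then (p * a) choose i
                      else if k = p then (p * a) choose (i - p) else 0)] (mod p)"
  proof (rule cong_sum)
    fix k
    show "[(p choose k) * ((p * a) choose (i - k))
          = (if k = 0 then (p * a) choose i
             else if k = p then (p * a) choose (i - p) else 0)] (mod p)"
    proof (cases "k = 0 \<or> k = p")
      case True
      then show ?thesis by auto
    next
      case False
      have "[p choose k = 0] (mod p)"
      proof (cases "k < p")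
        case True
        then show ?thesis using False p dvd_choose_prime[of k p] by (simp add: cong_0_iff)
      next
        case False
        then show ?thesis using \<open>\<not> (k = 0 \<or> k = p)\<close> by (simp add: binomial_eq_0)
      qed
      then have "[(p choose k) * ((p * a) choose (i - k)) = 0 * ((p * a) choose (i - k))] (mod p)"
        by (rule cong_scalar_right)
      then show ?thesis using False by simp
    qed
  qed
  also have "(\<Sum>k\<le>i. if k = 0 then (p * a) choose i
                      else if k = p then (p * a) choose (i - p) else 0)
      = ((p * a) choose i) + (if p \<le> i then (p * a) choose (i - p) else 0)"
    by (rule sum_atMost_two_points[OF p0])
  also have "[\<dots> = (if p dvd i then a choose (i div p) else 0)
               + (if p \<le> i then (if p dvd (i - p) then a choose ((i - p) div p) else 0) else 0)] (mod p)"
    using Suc.IH by (intro cong_add) auto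
  also have "(if p dvd i then a choose (i div p) else 0)
        + (if p \<le> i then (if p dvd (i - p) then a choose ((i - p) div p) else 0) else 0)
      = (if p dvd i then Suc a choose (i div p) else 0)"
  proof (cases "p dvd i")
    case True
    then obtain t where t: "i = p * t" by blast
    show ?thesis
    proof (cases t)
      case 0
      then show ?thesis using t p0 by simp
    next
      case (Suc t')
      then have "i - p = p * t'" using t by simp
      then show ?thesis using t Suc p0 by simp
    qed
  next
    case False
    then have "p \<le> i \<Longrightarrow> \<not> p dvd (i - p)"
      by (metis dvd_add_right_iff dvd_refl le_add_diff_inverse)
    then show ?thesis using False by auto
  qed
  finally show ?case .
qed

lemma choose_prime_power_mult_cong:
  assumes p: "prime p"
  shows "[(p ^ m * a) choose i = (if p ^ m dvd i then a choose (i div p ^ m) else 0)] (mod p)"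
proof (induction m arbitrary: a i)
  case 0
  then show ?case by simp
next
  case (Suc m)
  have "(p ^ Suc m * a) choose i = (p ^ m * (p * a)) choose i" by (simp add: ac_simps)
  also have "[\<dots> = (if p ^ m dvd i then (p * a) choose (i div p ^ m) else 0)] (mod p)"
    by (rule Suc.IH)
  also have "[(if p ^ m dvd i then (p * a) choose (i div p ^ m) else 0)
            = (if p ^ m dvd i then (if p dvd (i div p ^ m)
                      then a choose (i div p ^ m div p) else 0) else 0)] (mod p)"
    using choose_prime_mult_cong[OF p, of a "i div p ^ m"] by auto
  also have "(if p ^ m dvd i then (if p dvd (i div p ^ m)
                      then a choose (i div p ^ m div p) else 0) else 0)
      = (if p ^ Suc m dvd i then a choose (i div p ^ Suc m) else 0)"
  proof (cases "p ^ m dvd i")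
    case True
    then obtain t where t: "i = p ^ m * t" by blast
    have "p > 0" using p prime_gt_0_nat by simp
    then have "p ^ Suc m dvd i \<longleftrightarrow> p dvd t"
      using t by (simp add: mult.commute[of p])
    moreover have "i div p ^ Suc m = i div p ^ m div p"
      by (simp add: div_mult2_eq mult.commute[of p])
    ultimately show ?thesis using True t \<open>p > 0\<close> by simp
  next
    case False
    then have "\<not> p ^ Suc m dvd i"
      using dvd_trans[of "p ^ m" "p ^ Suc m" i] by auto
    then show ?thesis using False by simp
  qed
  finally show ?case .
qed

text \<open>By Vandermonde only \<open>k = q b\<close> contributes: other multiples of \<open>q\<close>
  leave too much for \<open>r < q\<close>, and non-multiples vanish mod \<open>p\<close>.\<close>

lemma choose_prime_power_digit_cong:
  assumes p: "prime p" and r: "r < p ^ m" and s: "s < p ^ m"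
  shows "[(p ^ m * a + r) choose (p ^ m * b + s) = (a choose b) * (r choose s)] (mod p)"
proof -
  define q where "q = p ^ m"
  have q0: "q > 0" using p prime_gt_0_nat by (simp add: q_def)
  have r': "r < q" and s': "s < q" using r s by (simp_all add: q_def)
  have "(q * a + r) choose (q * b + s) = (\<Sum>k\<le>q * b + s. ((q * a) choose k) * (r choose (q * b + s - k)))"
    by (simp add: vandermonde)
  also have "[\<dots> = (\<Sum>k\<le>q * b + s. if k = q * b then (a choose b) * (r choose s) else 0)] (mod p)"
  proof (rule cong_sum)
    fix k assume k: "k \<in> {..q * b + s}"
    show "[((q * a) choose k) * (r choose (q * b + s - k))
          = (if k = q * b then (a choose b) * (r choose s) else 0)] (mod p)"
    proof (cases "q dvd k")
      case True
      then obtain t where t: "k = q * t" by blast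
      consider "t = b" | "t < b" | "t > b" by linarith
      then show ?thesis
      proof cases
        case 1
        have "[(q * a) choose (q * b) = a choose b] (mod p)"
          using choose_prime_power_mult_cong[OF p, of m a "q * b"] prime_gt_0_nat[OF p]
          by (simp add: q_def)
        then have "[((q * a) choose k) * (r choose s) = (a choose b) * (r choose s)] (mod p)"
          using 1 t by (simp add: cong_scalar_right)
        then show ?thesis using 1 t by simp
      next
        case 2
        then have "q * t + q \<le> q * b"
          by (metis Suc_leI mult_Suc_right mult_le_mono2 add.commute)
        then have "r choose (q * b + s - k) = 0"
          using t r' by (intro binomial_eq_0) linarith
        moreover have "k \<noteq> q * b" using 2 t q0 by simp
        ultimately show ?thesis by (simp add: binomial_eq_0)
      next
        case 3
        then have "q * (b + 1) \<le> k" unfolding t by (intro mult_le_mono2) simp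
        then show ?thesis using k s' by simp
      qed
    next
      case False
      then have "[(q * a) choose k = 0] (mod p)"
        using choose_prime_power_mult_cong[OF p, of m a k] by (simp add: q_def)
      then have "[((q * a) choose k) * (r choose (q * b + s - k)) = 0 * (r choose (q * b + s - k))] (mod p)"
        by (rule cong_scalar_right)
      then show ?thesis using False by auto
    qed
  qed
  also have "(\<Sum>k\<le>q * b + s. if k = q * b then (a choose b) * (r choose s) else 0)
           = (a choose b) * (r choose s)"
    by simp
  finally show ?thesis unfolding q_def .
qed

section \<open>\<open>q\<close>-adic digits\<close>

lemma qadic_trunc_Suc:
  "qadic_trunc q c (Suc N) = c 0 + q * qadic_trunc q (c \<circ> Suc) N"
  unfolding qadic_trunc_def sum.lessThan_Suc_shift
  by (simp add: sum_distrib_left ac_simps del: sum.lessThan_Suc)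

lemma nat_digits_0: "nat_digits q j 0 = j mod q"
  unfolding nat_digits_def by simp

lemma nat_digits_Suc: "nat_digits q j (Suc i) = nat_digits q (j div q) i"
  unfolding nat_digits_def by (simp add: div_mult2_eq)

lemma nat_digits_less: "q > 0 \<Longrightarrow> nat_digits q j i < q"
  unfolding nat_digits_def by simp

lemma prime_power_ge_2:
  assumes "prime (p :: nat)" "m \<ge> 1"
  shows "p ^ m \<ge> 2"
proof -
  have "2 \<le> p" using assms(1) by (rule prime_ge_2_nat)
  also have "p \<le> p ^ m" using assms prime_gt_0_nat[OF assms(1)] by (intro self_le_power) auto
  finally show ?thesis .
qed

lemma less_power_if_le:
  assumes "q \<ge> 2" "j \<le> N"
  shows "j < q ^ N"
proof -
  have "j < 2 ^ j" by (rule less_exp)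
  also have "\<dots> \<le> q ^ j" using assms(1) by (rule power_mono) simp
  also have "\<dots> \<le> q ^ N" using assms by (intro power_increasing) auto
  finally show ?thesis .
qed

lemma nat_digits_eq_0: "q \<ge> 2 \<Longrightarrow> j \<le> i \<Longrightarrow> nat_digits q j i = 0"
  using less_power_if_le[of q j i] unfolding nat_digits_def by simp

lemma nat_digits_support_subset:
  assumes "q \<ge> 2"
  shows "{i. nat_digits q j i \<noteq> 0} \<subseteq> {..<j}"
proof
  fix i assume "i \<in> {i. nat_digits q j i \<noteq> 0}"
  then show "i \<in> {..<j}" using nat_digits_eq_0[OF assms, of j i] by (cases "j \<le> i") auto
qed

lemma finite_nat_digits_support: "q \<ge> 2 \<Longrightarrow> finite {i. nat_digits q j i \<noteq> 0}"
  using nat_digits_support_subset finite_lessThan by (rule finite_subset)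

lemma nat_digits_qadic_trunc:
  assumes "q > 0" "\<forall>k. e k < q"
  shows "nat_digits q (qadic_trunc q e M) i = (if i < M then e i else 0)"
  using assms(2)
proof (induction M arbitrary: e i)
  case 0
  then show ?case by (simp add: qadic_trunc_def nat_digits_def)
next
  case (Suc M)
  have shift: "(e 0 + q * y) div q = y" for y using assms(1) Suc.prems by simp
  show ?case
  proof (cases i)
    case 0
    then show ?thesis using Suc.prems by (simp add: qadic_trunc_Suc nat_digits_0)
  next
    case (Suc i')
    then show ?thesis
      using Suc.IH[of "e \<circ> Suc" i'] Suc.prems
      by (simp add: qadic_trunc_Suc nat_digits_Suc shift o_def)
  qed
qed

lemma nat_digits_sum_powers:
  assumes "q > 0" "finite K" "\<forall>k\<in>K. e k < q"
  shows "nat_digits q (\<Sum>k\<in>K. e k * q ^ k) i = (if i \<in> K then e i else 0)"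
proof -
  obtain M where M: "K \<subseteq> {..<M}"
    using assms(2) finite_nat_set_iff_bounded by (meson lessThan_iff subsetI)
  define e' where "e' k = (if k \<in> K then e k else 0)" for k
  have "(\<Sum>k\<in>K. e k * q ^ k) = qadic_trunc q e' M"
    unfolding qadic_trunc_def e'_def using M
    by (intro sum.mono_neutral_cong_left) auto
  moreover have "\<forall>k. e' k < q" using assms(1,3) by (simp add: e'_def)
  ultimately show ?thesis
    using nat_digits_qadic_trunc[OF assms(1)] M by (auto simp: e'_def)
qed

lemma nat_digits_rho_star_nat:
  assumes "bij \<rho>" "q \<ge> 2"
  shows "nat_digits q (rho_star_nat \<rho> q j) = nat_digits q j \<circ> inv \<rho>"
proof
  fix k
  define d where "d = nat_digits q j"
  define S where "S = {i. d i \<noteq> 0}"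
  have "finite S" using finite_nat_digits_support[OF assms(2)] by (simp add: S_def d_def)
  have inj: "inj \<rho>" using assms(1) bij_is_inj by blast
  have "rho_star_nat \<rho> q j = (\<Sum>i\<in>S. d (inv \<rho> (\<rho> i)) * q ^ \<rho> i)"
    unfolding rho_star_nat_def S_def d_def by (simp add: inv_f_f[OF inj])
  also have "\<dots> = (\<Sum>l\<in>\<rho> ` S. d (inv \<rho> l) * q ^ l)"
    using inj by (simp add: sum.reindex inj_on_subset)
  finally have "nat_digits q (rho_star_nat \<rho> q j) k = (if k \<in> \<rho> ` S then d (inv \<rho> k) else 0)"
    using nat_digits_sum_powers[of q "\<rho> ` S"] \<open>finite S\<close> assms(2)
    by (simp add: d_def nat_digits_less)
  also have "\<dots> = d (inv \<rho> k)"
    using assms(1) by (auto simp: S_def image_iff) (metis bij_is_surj surj_f_inv_f)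
  finally show "nat_digits q (rho_star_nat \<rho> q j) k = (nat_digits q j \<circ> inv \<rho>) k"
    by (simp add: d_def)
qed

section \<open>Lucas' theorem for \<open>q\<close>-adic expansions\<close>

lemma choose_qadic_trunc_cong:
  assumes p: "prime p" and c: "\<forall>i. c i < p ^ m" and j: "j < (p ^ m) ^ N"
  shows "[qadic_trunc (p ^ m) c N choose j = (\<Prod>i<N. c i choose nat_digits (p ^ m) j i)] (mod p)"
  using c j
proof (induction N arbitrary: c j)
  case 0
  then show ?case by (simp add: qadic_trunc_def)
next
  case (Suc N)
  define q where "q = p ^ m"
  have q0: "q > 0" using p prime_gt_0_nat by (simp add: q_def)
  have "j div q < q ^ N"
    using Suc.prems(2) by (intro less_mult_imp_div_less) (simp add: q_def ac_simps)
  then have IH: "[qadic_trunc q (c \<circ> Suc) N choose (j div q)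
      = (\<Prod>i<N. c (Suc i) choose nat_digits q (j div q) i)] (mod p)"
    using Suc.IH[of "c \<circ> Suc" "j div q"] Suc.prems by (simp add: q_def o_def)
  have "qadic_trunc q c (Suc N) choose j
      = (q * qadic_trunc q (c \<circ> Suc) N + c 0) choose (q * (j div q) + j mod q)"
    by (simp add: qadic_trunc_Suc add.commute)
  also have "[\<dots> = (qadic_trunc q (c \<circ> Suc) N choose (j div q)) * (c 0 choose (j mod q))] (mod p)"
    unfolding q_def using Suc.prems q0
    by (intro choose_prime_power_digit_cong[OF p]) (simp_all add: q_def)
  also have "[(qadic_trunc q (c \<circ> Suc) N choose (j div q)) * (c 0 choose (j mod q))
      = (\<Prod>i<N. c (Suc i) choose nat_digits q (j div q) i) * (c 0 choose (j mod q))] (mod p)"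
    using IH by (rule cong_scalar_right)
  also have "(\<Prod>i<N. c (Suc i) choose nat_digits q (j div q) i) * (c 0 choose (j mod q))
      = (\<Prod>i<Suc N. c i choose nat_digits q j i)"
    unfolding prod.lessThan_Suc_shift
    by (simp add: nat_digits_Suc nat_digits_0 del: prod.lessThan_Suc)
  finally show ?case unfolding q_def .
qed

lemma binom_modp_eq_prod_digits:
  assumes p: "prime p" and m: "m \<ge> 1" and c: "\<forall>i. c i < p ^ m"
  shows "binom_modp p (p ^ m) c j
       = (\<Prod>i\<in>{i. nat_digits (p ^ m) j i \<noteq> 0}. c i choose nat_digits (p ^ m) j i) mod p"
    (is "_ = ?V")
proof -
  have q2: "p ^ m \<ge> 2" using p m by (rule prime_power_ge_2)
  have eventually_V: "(qadic_trunc (p ^ m) c N choose j) mod p = ?V" if N: "N \<ge> j" for N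
  proof -
    have "[qadic_trunc (p ^ m) c N choose j = (\<Prod>i<N. c i choose nat_digits (p ^ m) j i)] (mod p)"
      using p c less_power_if_le[OF q2 N] by (rule choose_qadic_trunc_cong)
    moreover have "(\<Prod>i<N. c i choose nat_digits (p ^ m) j i)
        = (\<Prod>i\<in>{i. nat_digits (p ^ m) j i \<noteq> 0}. c i choose nat_digits (p ^ m) j i)"
      using nat_digits_support_subset[OF q2, of j] N by (intro prod.mono_neutral_right) auto
    ultimately show ?thesis by (simp add: cong_def)
  qed
  show ?thesis
    unfolding binom_modp_def
  proof (rule the_equality)
    show "\<forall>\<^sub>F N in sequentially. (qadic_trunc (p ^ m) c N choose j) mod p = ?V"
      using eventually_V by (auto simp: eventually_sequentially)
  next
    fix v assume "\<forall>\<^sub>F N in sequentially. (qadic_trunc (p ^ m) c N choose j) mod p = v"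
    then obtain N where "\<forall>n\<ge>N. (qadic_trunc (p ^ m) c n choose j) mod p = v"
      by (auto simp: eventually_sequentially)
    then show "v = ?V" using eventually_V[of "max N j"] by simp
  qed
qed

theorem proposition7p3:
  fixes p m0 j :: nat and \<rho> c :: "nat \<Rightarrow> nat"
  assumes "prime p" and "m0 \<ge> 1" and "bij \<rho>"
    and "\<forall>i. c i < p ^ m0"
  shows "binom_modp p (p ^ m0) (rho_star_digits (inv \<rho>) c) j
       = binom_modp p (p ^ m0) c (rho_star_nat \<rho> (p ^ m0) j)"
proof -
  define q where "q = p ^ m0"
  have q2: "q \<ge> 2" using prime_power_ge_2[OF assms(1,2)] by (simp add: q_def)
  have cq: "\<forall>i. c i < q" using assms(4) by (simp add: q_def)
  have binom_q: "binom_modp p q c' j'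
      = (\<Prod>i\<in>{i. nat_digits q j' i \<noteq> 0}. c' i choose nat_digits q j' i) mod p"
    if "\<forall>i. c' i < q" for c' j'
    using that unfolding q_def by (rule binom_modp_eq_prod_digits[OF assms(1,2)])
  define d where "d = nat_digits q j"
  define S where "S = {i. d i \<noteq> 0}"
  have digits_J: "nat_digits q (rho_star_nat \<rho> q j) = d \<circ> inv \<rho>"
    using nat_digits_rho_star_nat[OF assms(3) q2] by (simp add: d_def)
  have support_J: "{k. nat_digits q (rho_star_nat \<rho> q j) k \<noteq> 0} = \<rho> ` S"
    using bij_image_Collect_eq[OF assms(3)] by (simp add: digits_J S_def)
  have "rho_star_digits (inv \<rho>) c = c \<circ> \<rho>"
    by (simp add: rho_star_digits_def inv_inv_eq[OF assms(3)])
  then have "binom_modp p q (rho_star_digits (inv \<rho>) c) j = (\<Prod>i\<in>S. c (\<rho> i) choose d i) mod p"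
    using binom_q[of "c \<circ> \<rho>" j] cq by (simp add: d_def S_def)
  also have "\<dots> = (\<Prod>k\<in>\<rho> ` S. c k choose d (inv \<rho> k)) mod p"
    using bij_is_inj[OF assms(3)] by (simp add: prod.reindex inj_on_subset inv_f_f)
  also have "\<dots> = binom_modp p q c (rho_star_nat \<rho> q j)"
    using binom_q[OF cq, of "rho_star_nat \<rho> q j"] unfolding support_J by (simp add: digits_J)
  finally show ?thesis unfolding q_def .
qed

end
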